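(* Let $\mathbf P=(P,\leq,{}',0,1)$ be an orthogonal lub-complete poset. Then the following conditions are equivalent: (i) $\mathbf P$ is an orthocomplemented poset. (ii) For all $x,y\in P$, $x\leq y$ implies $x\rightarrow_K y=1$. (iii) For all $x,y\in P$, $x\leq y$ implies $x\rightarrow_N y=1$.
   Context: $(P,\leq,{}',0,1)$ is a bounded poset with an antitone involution ${}'$; orthogonal means $x\leq y'$ implies $x\vee y$ exists; lub-complete means for every lower bound $x$ of a finite subset $M$ there is a maximal lower bound of $M$ above $x$; orthocomplemented means $x\vee x'=1$ for all $x$. For $A\subseteq P$, $L(A)$, $U(A)$ are the lower and upper cones, $\mathrm{Max}\,A$, $\mathrm{Min}\,A$ the sets of maximal and minimal elements; joins/meets with sets are elementwise. Kalmbach implication: $x\rightarrow_K y:=\mathrm{Max}\,L(x',y)\vee \mathrm{Max}\,L(x',y')\vee (x\wedge \mathrm{Min}\,U(x',y))$; non-tolens implication: $x\rightarrow_N y:=y'\rightarrow_K x'$. "$=1$" means equal to $\{1\}$. *)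

theory Defs
  imports Main
begin

definition bounded_poset_inv ::
  "('a \<Rightarrow> 'a \<Rightarrow> bool) \<Rightarrow> ('a \<Rightarrow> 'a) \<Rightarrow> 'a \<Rightarrow> 'a \<Rightarrow> bool" where
  "bounded_poset_inv le c zer one \<longleftrightarrow>
     (\<forall>x. le x x) \<and> (\<forall>x y. le x y \<and> le y x \<longrightarrow> x = y) \<and>
     (\<forall>x y w. le x y \<and> le y w \<longrightarrow> le x w) \<and>
     (\<forall>x. le zer x \<and> le x one) \<and>
     (\<forall>x y. le x y \<longrightarrow> le (c y) (c x)) \<and> (\<forall>x. c (c x) = x)"

definition is_lub :: "('a \<Rightarrow> 'a \<Rightarrow> bool) \<Rightarrow> 'a \<Rightarrow> 'a \<Rightarrow> 'a \<Rightarrow> bool" where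
  "is_lub le s x y \<longleftrightarrow> le x s \<and> le y s \<and> (\<forall>u. le x u \<and> le y u \<longrightarrow> le s u)"

definition is_glb :: "('a \<Rightarrow> 'a \<Rightarrow> bool) \<Rightarrow> 'a \<Rightarrow> 'a \<Rightarrow> 'a \<Rightarrow> bool" where
  "is_glb le m x y \<longleftrightarrow> le m x \<and> le m y \<and> (\<forall>u. le u x \<and> le u y \<longrightarrow> le u m)"

definition LC :: "('a \<Rightarrow> 'a \<Rightarrow> bool) \<Rightarrow> 'a set \<Rightarrow> 'a set" where
  "LC le A = {x. \<forall>a\<in>A. le x a}"

definition UC :: "('a \<Rightarrow> 'a \<Rightarrow> bool) \<Rightarrow> 'a set \<Rightarrow> 'a set" where
  "UC le A = {x. \<forall>a\<in>A. le a x}"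

definition MaxS :: "('a \<Rightarrow> 'a \<Rightarrow> bool) \<Rightarrow> 'a set \<Rightarrow> 'a set" where
  "MaxS le A = {a\<in>A. \<forall>b\<in>A. le a b \<longrightarrow> b = a}"

definition MinS :: "('a \<Rightarrow> 'a \<Rightarrow> bool) \<Rightarrow> 'a set \<Rightarrow> 'a set" where
  "MinS le A = {a\<in>A. \<forall>b\<in>A. le b a \<longrightarrow> b = a}"

definition orthogonal :: "('a \<Rightarrow> 'a \<Rightarrow> bool) \<Rightarrow> ('a \<Rightarrow> 'a) \<Rightarrow> bool" where
  "orthogonal le c \<longleftrightarrow> (\<forall>x y. le x (c y) \<longrightarrow> (\<exists>s. is_lub le s x y))"

definition lub_complete :: "('a \<Rightarrow> 'a \<Rightarrow> bool) \<Rightarrow> bool" where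
  "lub_complete le \<longleftrightarrow>
     (\<forall>M x. finite M \<and> x \<in> LC le M \<longrightarrow> (\<exists>m\<in>MaxS le (LC le M). le x m))"

definition orthocomplemented :: "('a \<Rightarrow> 'a \<Rightarrow> bool) \<Rightarrow> ('a \<Rightarrow> 'a) \<Rightarrow> 'a \<Rightarrow> bool" where
  "orthocomplemented le c one \<longleftrightarrow> (\<forall>x. is_lub le one x (c x))"

definition set_join :: "('a \<Rightarrow> 'a \<Rightarrow> bool) \<Rightarrow> 'a set \<Rightarrow> 'a set \<Rightarrow> 'a set" where
  "set_join le A B = {s. \<exists>a\<in>A. \<exists>b\<in>B. is_lub le s a b}"

definition set_meet :: "('a \<Rightarrow> 'a \<Rightarrow> bool) \<Rightarrow> 'a set \<Rightarrow> 'a set \<Rightarrow> 'a set" where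
  "set_meet le A B = {m. \<exists>a\<in>A. \<exists>b\<in>B. is_glb le m a b}"

definition impl_K :: "('a \<Rightarrow> 'a \<Rightarrow> bool) \<Rightarrow> ('a \<Rightarrow> 'a) \<Rightarrow> 'a \<Rightarrow> 'a \<Rightarrow> 'a set" where
  "impl_K le c x y =
     set_join le
       (set_join le (MaxS le (LC le {c x, y})) (MaxS le (LC le {c x, c y})))
       (set_meet le {x} (MinS le (UC le {c x, y})))"

definition impl_N :: "('a \<Rightarrow> 'a \<Rightarrow> bool) \<Rightarrow> ('a \<Rightarrow> 'a) \<Rightarrow> 'a \<Rightarrow> 'a \<Rightarrow> 'a set" where
  "impl_N le c x y = impl_K le c (c y) (c x)"

end

theory Submission
  imports Defs
begin

text \<open>
  For \<open>x \<le> y\<close> the Kalmbach implication collapses: \<open>Max L(x', y') = {y'}\<close>, and the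
  set \<open>Min U(x', y)\<close>, nonempty by lub-completeness transported along the involution, lies
  above \<open>y \<ge> x\<close>; so \<open>x \<rightarrow>\<^sub>K y = (Max L(x', y) \<or> y') \<or> x\<close>, all these joins existing by
  orthogonality. For \<open>x = y\<close> this is \<open>x' \<or> x\<close>, hence (ii) gives \<open>x \<or> x' = 1\<close>. Conversely,
  in an orthocomplemented poset let \<open>a\<close> be maximal below \<open>x'\<close> and \<open>y\<close> and
  \<open>r = (a \<or> y') \<or> x\<close>. Then \<open>r'\<close> lies below \<open>x'\<close>, \<open>y\<close> and \<open>a'\<close>; maximality of \<open>a\<close> forces
  \<open>a \<or> r' = a\<close>, so \<open>r'\<close> is a common lower bound of \<open>a\<close> and \<open>a'\<close>, i.e. \<open>r' = 0\<close> and \<open>r = 1\<close>.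
  Condition (iii) is (ii) read through the involution.
\<close>

locale bounded_involution_poset =
  fixes le :: "'a \<Rightarrow> 'a \<Rightarrow> bool" and c :: "'a \<Rightarrow> 'a" and zer one :: 'a
  assumes bounded_poset_inv: "bounded_poset_inv le c zer one"
begin

lemma refl: "le x x"
  using bounded_poset_inv unfolding bounded_poset_inv_def by blast

lemma antisym: "le x y \<Longrightarrow> le y x \<Longrightarrow> x = y"
  using bounded_poset_inv unfolding bounded_poset_inv_def by blast

lemma trans: "le x y \<Longrightarrow> le y z \<Longrightarrow> le x z"
  using bounded_poset_inv unfolding bounded_poset_inv_def by blast

lemma zer_le: "le zer x"
  using bounded_poset_inv unfolding bounded_poset_inv_def by blast

lemma le_one: "le x one"
  using bounded_poset_inv unfolding bounded_poset_inv_def by blast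

lemma c_antitone: "le x y \<Longrightarrow> le (c y) (c x)"
  using bounded_poset_inv unfolding bounded_poset_inv_def by blast

lemma c_c [simp]: "c (c x) = x"
  using bounded_poset_inv unfolding bounded_poset_inv_def by blast

lemma c_le_c_iff [simp]: "le (c y) (c x) \<longleftrightarrow> le x y"
  by (metis c_antitone c_c)

lemma le_c_iff: "le x (c y) \<longleftrightarrow> le y (c x)"
  by (metis c_le_c_iff c_c)

lemma c_le_iff: "le (c x) y \<longleftrightarrow> le (c y) x"
  by (metis c_le_c_iff c_c)

lemma c_inject [simp]: "c x = c y \<longleftrightarrow> x = y"
  by (metis c_c)

lemma inj_c: "inj c"
  by (simp add: inj_on_def)

lemma c_one: "c one = zer"
  by (metis antisym c_antitone c_c le_one zer_le)

lemma c_eq_zer_iff: "c x = zer \<longleftrightarrow> x = one"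
  by (metis c_c c_one)

lemma is_lub_unique: "is_lub le s a b \<Longrightarrow> is_lub le t a b \<Longrightarrow> s = t"
  unfolding is_lub_def by (metis antisym)

lemma is_glb_unique: "is_glb le m a b \<Longrightarrow> is_glb le n a b \<Longrightarrow> m = n"
  unfolding is_glb_def by (metis antisym)

lemma is_lub_of_le: "le a b \<Longrightarrow> is_lub le b a b"
  unfolding is_lub_def by (metis refl)

lemma is_glb_of_le: "le a b \<Longrightarrow> is_glb le a a b"
  unfolding is_glb_def by (metis refl)

lemma is_lub_commute: "is_lub le s a b \<longleftrightarrow> is_lub le s b a"
  unfolding is_lub_def by blast

lemma set_join_singleton_right:
  "set_join le A {b} = {s. \<exists>a\<in>A. is_lub le s a b}"
  unfolding set_join_def by blast

lemma set_meet_singleton_below: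
  assumes "M \<noteq> {}" and "\<And>t. t \<in> M \<Longrightarrow> le x t"
  shows "set_meet le {x} M = {x}"
  using assms is_glb_of_le is_glb_unique unfolding set_meet_def by blast

lemma mem_UC_image_c_iff: "t \<in> UC le (c ` A) \<longleftrightarrow> c t \<in> LC le A"
  unfolding UC_def LC_def by (simp add: c_le_iff[of _ t])

lemma UC_image_c: "UC le (c ` A) = c ` LC le A"
  by (auto simp: mem_UC_image_c_iff) (metis c_c image_eqI)

lemma mem_MinS_image_c_iff: "c m \<in> MinS le (c ` B) \<longleftrightarrow> m \<in> MaxS le B"
  unfolding MinS_def MaxS_def by (simp add: inj_image_mem_iff[OF inj_c])

lemma MinS_image_c: "MinS le (c ` B) = c ` MaxS le B"
proof -
  have "MinS le (c ` B) \<subseteq> c ` B"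
    unfolding MinS_def by blast
  then show ?thesis
    using mem_MinS_image_c_iff by blast
qed

lemma MinS_UC_image_c: "MinS le (UC le (c ` A)) = c ` MaxS le (LC le A)"
  by (simp add: UC_image_c MinS_image_c)

lemma MaxS_LC_nonempty:
  assumes "lub_complete le" and "finite A"
  shows "MaxS le (LC le A) \<noteq> {}"
proof -
  have "zer \<in> LC le A"
    unfolding LC_def using zer_le by blast
  then show ?thesis
    using assms unfolding lub_complete_def by blast
qed

lemma MinS_UC_nonempty:
  assumes "lub_complete le" and "finite A"
  shows "MinS le (UC le A) \<noteq> {}"
proof -
  have "A = c ` (c ` A)"
    by (simp add: image_image)
  then show ?thesis
    using MinS_UC_image_c[of "c ` A"] MaxS_LC_nonempty[OF assms(1)] assms(2) by auto
qed

lemma MaxS_LC_pair_of_le: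
  assumes "le a b"
  shows "MaxS le (LC le {a, b}) = {a}"
  using assms unfolding MaxS_def LC_def by (auto intro: refl antisym)

lemma impl_K_of_le:
  assumes "lub_complete le" and "le x y"
  shows "impl_K le c x y =
    set_join le (set_join le (MaxS le (LC le {c x, y})) {c y}) {x}"
proof -
  have "MaxS le (LC le {c x, c y}) = {c y}"
    using MaxS_LC_pair_of_le[OF c_antitone[OF assms(2)]] by (metis insert_commute)
  moreover have "set_meet le {x} (MinS le (UC le {c x, y})) = {x}"
  proof (rule set_meet_singleton_below)
    show "MinS le (UC le {c x, y}) \<noteq> {}"
      using MinS_UC_nonempty[OF assms(1)] by simp
    show "le x t" if "t \<in> MinS le (UC le {c x, y})" for t
    proof -
      have "le y t"
        using that unfolding MinS_def UC_def by blast
      then show ?thesis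
        using assms(2) trans by blast
    qed
  qed
  ultimately show ?thesis
    unfolding impl_K_def by (simp only:)
qed

lemma orthocomplemented_lower_bound_eq_zer:
  assumes "orthocomplemented le c one" and "le v a" and "le v (c a)"
  shows "v = zer"
proof -
  have "le (c a) (c v)" and "le a (c v)"
    using c_antitone[OF assms(2)] assms(3) le_c_iff[of v a] by simp_all
  with assms(1) have "le one (c v)"
    unfolding orthocomplemented_def is_lub_def by blast
  then have "c v = one"
    using antisym le_one by blast
  then show ?thesis
    by (metis c_c c_one)
qed

lemma orthocomplemented_join_MaxS_LC_eq_one:
  assumes oc: "orthocomplemented le c one" and og: "orthogonal le c"
    and a: "a \<in> MaxS le (LC le {c x, y})"
    and s: "is_lub le s a (c y)" and r: "is_lub le r s x"
  shows "r = one"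
proof -
  have a_le: "le a (c x)" "le a y"
    using a unfolding MaxS_def LC_def by auto
  have "le a r" "le (c y) r" "le x r"
    using s r trans unfolding is_lub_def by blast+
  then have cr: "le (c r) (c x)" "le (c r) y" "le (c r) (c a)"
    using c_le_iff[of y r] by simp_all
  obtain w where w: "is_lub le w a (c r)"
    using og \<open>le a r\<close> unfolding orthogonal_def by (metis c_c)
  have "w \<in> LC le {c x, y}"
    using w a_le cr unfolding is_lub_def LC_def by auto
  with a w have "w = a"
    unfolding MaxS_def is_lub_def by blast
  with w have "le (c r) a"
    unfolding is_lub_def by blast
  with cr(3) have "c r = zer"
    using orthocomplemented_lower_bound_eq_zer[OF oc] by blast
  then show ?thesis
    by (simp add: c_eq_zer_iff)
qed

lemma impl_K_of_le_eq_one: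
  assumes oc: "orthocomplemented le c one" and og: "orthogonal le c"
    and lc: "lub_complete le" and xy: "le x y"
  shows "impl_K le c x y = {one}"
proof -
  obtain a where a: "a \<in> MaxS le (LC le {c x, y})"
    using MaxS_LC_nonempty[OF lc, of "{c x, y}"] by auto
  then have a_le: "le a (c x)" "le a y"
    unfolding MaxS_def LC_def by auto
  obtain s where s: "is_lub le s a (c y)"
    using og a_le(2) unfolding orthogonal_def by (metis c_c)
  have "le s (c x)"
    using s a_le(1) xy unfolding is_lub_def by simp
  then obtain r where r: "is_lub le r s x"
    using og unfolding orthogonal_def by (metis le_c_iff)
  have "impl_K le c x y =
      {r. \<exists>a\<in>MaxS le (LC le {c x, y}). \<exists>s. is_lub le s a (c y) \<and> is_lub le r s x}"
    unfolding impl_K_of_le[OF lc xy] set_join_singleton_right by blast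
  then show ?thesis
    using orthocomplemented_join_MaxS_LC_eq_one[OF oc og] a s r by blast
qed

lemma orthocomplemented_if_impl_K_refl_eq_one:
  assumes "lub_complete le" and "\<And>x. impl_K le c x x = {one}"
  shows "orthocomplemented le c one"
  unfolding orthocomplemented_def
proof
  fix x
  have "one \<in> set_join le (set_join le (MaxS le (LC le {c x, x})) {c x}) {x}"
    using assms impl_K_of_le[OF assms(1) refl] by simp
  then obtain a s where a: "a \<in> MaxS le (LC le {c x, x})"
    and s: "is_lub le s a (c x)" and r: "is_lub le one s x"
    unfolding set_join_singleton_right by blast
  have "le a (c x)"
    using a unfolding MaxS_def LC_def by auto
  with s have "s = c x"
    using is_lub_of_le is_lub_unique by blast
  with r show "is_lub le one x (c x)"
    by (simp add: is_lub_commute)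
qed

lemma impl_N_iff_impl_K:
  "(\<forall>x y. le x y \<longrightarrow> impl_N le c x y = {one}) \<longleftrightarrow>
   (\<forall>x y. le x y \<longrightarrow> impl_K le c x y = {one})"
  unfolding impl_N_def by (metis c_le_c_iff c_c)

end

theorem theorem4:
  fixes le :: "'a \<Rightarrow> 'a \<Rightarrow> bool" and c :: "'a \<Rightarrow> 'a" and zer one :: 'a
  assumes "bounded_poset_inv le c zer one"
    and "orthogonal le c"
    and "lub_complete le"
  shows "(orthocomplemented le c one \<longleftrightarrow> (\<forall>x y. le x y \<longrightarrow> impl_K le c x y = {one}))
       \<and> (orthocomplemented le c one \<longleftrightarrow> (\<forall>x y. le x y \<longrightarrow> impl_N le c x y = {one}))"
proof -
  interpret bounded_involution_poset le c zer one
    using assms(1) by unfold_locales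
  have "orthocomplemented le c one \<longleftrightarrow> (\<forall>x y. le x y \<longrightarrow> impl_K le c x y = {one})"
    using impl_K_of_le_eq_one[OF _ assms(2,3)]
      orthocomplemented_if_impl_K_refl_eq_one[OF assms(3)] refl
    by blast
  then show ?thesis
    using impl_N_iff_impl_K by blast
qed

end
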